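(* Let $g\ge1$, $0\le g'<g$, $g''=g-g'$, and fix Siegel sets $\mathfrak{F}_g(u)\subset\mathfrak{S}_g$, $\mathfrak{F}_{g'}(u)\subset\mathfrak{S}_{g'}$, $\mathfrak{F}^+_{g''}(u)\subset\mathrm{Sym}^+(g'',\mathbb{R})$. Let $(\tau',t)\in\mathfrak{F}_{g'}(u)\times\mathfrak{F}^+_{g''}(u)$ be fixed, and let $V=V_X+iV_Y\in T_\tau\mathfrak{S}_g$ be a vertical tangent vector (i.e. $d\pi_{g'}(V)=0$) at a point $\tau\in\pi_{g'}^{-1}(\tau',t)\cap\mathfrak{F}_g(u)$. Then $$\|V\|_\tau^2=\operatorname{tr}\big(t^{-1}\,{}^tV'''_X(Y')^{-1}V'''_X\big)+\operatorname{tr}\big(t^{-1}\,{}^tV'''_Y(Y')^{-1}V'''_Y\big)+\tfrac12\operatorname{tr}\big(t^{-1}\tilde V''_X\,t^{-1}\tilde V''_X\big),$$ where $\tilde V''_X:=V''_X-{}^tV'''_X(Y')^{-1}Y'''-{}^tY'''(Y')^{-1}V'''_X\in\mathrm{Sym}(g'',\mathbb{R})$.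
   Context: $\mathfrak{S}_g=\{\tau\in\mathrm{Sym}(g,\mathbb{C}):\operatorname{Im}\tau>0\}$, $\tau=X+iY$. The Weil–Petersson norm of $V=V_X+iV_Y\in\mathrm{Sym}(g,\mathbb{C})\cong T_\tau\mathfrak{S}_g$ is $\|V\|_\tau^2=\frac12\big(\operatorname{tr}(Y^{-1}V_XY^{-1}V_X)+\operatorname{tr}(Y^{-1}V_YY^{-1}V_Y)\big)$. Block decompositions: $\tau=\begin{pmatrix}\tau'&\tau'''\\{}^t\tau'''&\tau''\end{pmatrix}$ with $\tau'$ of size $g'\times g'$ and $\tau''$ of size $g''\times g''$; the same for $X,Y,V_X,V_Y$ (blocks $V'_X,V'''_X,V''_X$, etc.). The map $\pi_{g'}:\mathfrak{S}_g\to\mathfrak{S}_{g'}\times\mathrm{Sym}^+(g'',\mathbb{R})$ is $\pi_{g'}(\tau)=(\tau',\,Y''-{}^tY'''(Y')^{-1}Y''')$. Jacobi decomposition $Y=LDL^t$, $L=(l_{ij})$ lower triangular unipotent, $D=\mathrm{diag}(d_1,\dots,d_g)$; Siegel sets $\mathfrak{F}_g(u)=\{X+iY: |x_{ij}|<u,\ |l_{ij}|<u,\ 1<ud_1,\ d_i<ud_{i+1}\}$ and $\mathfrak{F}^+_g(u)=\{Y\in\mathrm{Sym}^+(g,\mathbb{R}): |l_{ij}|<u,\ 1<ud_1,\ d_i<ud_{i+1}\}$. *)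

theory Defs
  imports "Jordan_Normal_Form.Gauss_Jordan_Elimination"
begin

(* Real n x n matrices are JNF matrices in carrier_mat n n.
   A point tau = X + iY of the Siegel space is represented by the pair (X, Y),
   a tangent vector V = V_X + i V_Y by the pair (V_X, V_Y). *)

definition sym_mat :: "nat \<Rightarrow> real mat \<Rightarrow> bool" where
  "sym_mat n A \<longleftrightarrow> A \<in> carrier_mat n n \<and> transpose_mat A = A"

definition pos_def_mat :: "nat \<Rightarrow> real mat \<Rightarrow> bool" where
  "pos_def_mat n A \<longleftrightarrow> sym_mat n A \<and>
     (\<forall>v \<in> carrier_vec n. v \<noteq> 0\<^sub>v n \<longrightarrow> v \<bullet> (A *\<^sub>v v) > 0)"

definition mtrace :: "real mat \<Rightarrow> real" where
  "mtrace A = (\<Sum>i<dim_row A. A $$ (i, i))"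

definition minv :: "real mat \<Rightarrow> real mat" where
  "minv A = the (mat_inverse A)"

definition siegel_space :: "nat \<Rightarrow> (real mat \<times> real mat) set" where
  "siegel_space g = {(X, Y). sym_mat g X \<and> pos_def_mat g Y}"

definition sym_complex :: "nat \<Rightarrow> (real mat \<times> real mat) set" where
  "sym_complex g = {(VX, VY). sym_mat g VX \<and> sym_mat g VY}"

definition wp_norm_sq :: "real mat \<times> real mat \<Rightarrow> real mat \<times> real mat \<Rightarrow> real" where
  "wp_norm_sq \<tau> V = (case \<tau> of (X, Y) \<Rightarrow> case V of (VX, VY) \<Rightarrow>
     (1/2) * (mtrace (minv Y * VX * minv Y * VX) + mtrace (minv Y * VY * minv Y * VY)))"

(* blocks A' (top-left g' x g'), A''' (top-right g' x g''), A'' (bottom-right g'' x g'') *)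
definition blk1 :: "nat \<Rightarrow> real mat \<Rightarrow> real mat" where
  "blk1 g' A = (case split_block A g' g' of (A1, A2, A3, A4) \<Rightarrow> A1)"
definition blk3 :: "nat \<Rightarrow> real mat \<Rightarrow> real mat" where
  "blk3 g' A = (case split_block A g' g' of (A1, A2, A3, A4) \<Rightarrow> A2)"
definition blk2 :: "nat \<Rightarrow> real mat \<Rightarrow> real mat" where
  "blk2 g' A = (case split_block A g' g' of (A1, A2, A3, A4) \<Rightarrow> A4)"

definition pi_map :: "nat \<Rightarrow> real mat \<times> real mat \<Rightarrow> (real mat \<times> real mat) \<times> real mat" where
  "pi_map g' \<tau> = (case \<tau> of (X, Y) \<Rightarrow>
     ((blk1 g' X, blk1 g' Y),
      blk2 g' Y - transpose_mat (blk3 g' Y) * minv (blk1 g' Y) * blk3 g' Y))"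

definition vertical :: "nat \<Rightarrow> nat \<Rightarrow> real mat \<times> real mat \<Rightarrow> real mat \<times> real mat \<Rightarrow> bool" where
  "vertical g g' \<tau> V \<longleftrightarrow> (case \<tau> of (X, Y) \<Rightarrow> case V of (VX, VY) \<Rightarrow>
     let p = (\<lambda>s::real. pi_map g' (X + s \<cdot>\<^sub>m VX, Y + s \<cdot>\<^sub>m VY)) in
     (\<forall>i<g'. \<forall>j<g'. ((\<lambda>s. fst (fst (p s)) $$ (i, j)) has_real_derivative 0) (at 0)) \<and>
     (\<forall>i<g'. \<forall>j<g'. ((\<lambda>s. snd (fst (p s)) $$ (i, j)) has_real_derivative 0) (at 0)) \<and>
     (\<forall>i<g - g'. \<forall>j<g - g'. ((\<lambda>s. snd (p s) $$ (i, j)) has_real_derivative 0) (at 0)))"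

definition jacobi_decomp :: "nat \<Rightarrow> real mat \<Rightarrow> real mat \<Rightarrow> real mat \<Rightarrow> bool" where
  "jacobi_decomp n Y L D \<longleftrightarrow> L \<in> carrier_mat n n \<and> D \<in> carrier_mat n n \<and>
     (\<forall>i<n. L $$ (i, i) = 1) \<and> (\<forall>i<n. \<forall>j<n. i < j \<longrightarrow> L $$ (i, j) = 0) \<and>
     diagonal_mat D \<and> Y = L * D * transpose_mat L"

(* Jacobi conditions (0-based indices: d_1 is D$$(0,0)) *)
definition jacobi_bounds :: "nat \<Rightarrow> real \<Rightarrow> real mat \<Rightarrow> real mat \<Rightarrow> bool" where
  "jacobi_bounds n u L D \<longleftrightarrow>
     (\<forall>i<n. \<forall>j<i. \<bar>L $$ (i, j)\<bar> < u) \<and>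
     (0 < n \<longrightarrow> 1 < u * D $$ (0, 0)) \<and>
     (\<forall>i. i + 1 < n \<longrightarrow> D $$ (i, i) < u * D $$ (i + 1, i + 1))"

definition siegel_set :: "nat \<Rightarrow> real \<Rightarrow> (real mat \<times> real mat) set" where
  "siegel_set g u = {(X, Y). (X, Y) \<in> siegel_space g \<and>
     (\<forall>i<g. \<forall>j<g. \<bar>X $$ (i, j)\<bar> < u) \<and>
     (\<exists>L D. jacobi_decomp g Y L D \<and> jacobi_bounds g u L D)}"

definition siegel_set_plus :: "nat \<Rightarrow> real \<Rightarrow> real mat set" where
  "siegel_set_plus g u = {Y. pos_def_mat g Y \<and>
     (\<exists>L D. jacobi_decomp g Y L D \<and> jacobi_bounds g u L D)}"

end

theory Submission
  imports Defs "Jordan_Normal_Form.Determinant"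
begin

(* Write Y = [[A, B], [B^t, C]] in blocks and let t = C - B^t A^-1 B be its Schur complement.
   The shear Q = [[1, -A^-1 B], [0, 1]] block-diagonalises Y, so Y^-1 = Q D Q^t with
   D = diag(A^-1, t^-1), and by cyclicity tr(Y^-1 V Y^-1 V) = tr(D U D U) for U = Q^t V Q.
   A vertical V has vanishing top-left blocks, hence U = [[0, V'''], [V'''^t, V''~]] and the
   trace splits as 2 tr(t^-1 V'''^t A^-1 V''') + tr(t^-1 V''~ t^-1 V''~). Finally V''~ is the
   derivative of the Schur complement along V, which verticality forces to vanish for V_Y. *)

lemma mtrace_mult_comm:
  fixes A B :: "real mat"
  assumes "A \<in> carrier_mat n m" "B \<in> carrier_mat m n"
  shows "mtrace (A * B) = mtrace (B * A)"
proof -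
  have "mtrace (A * B) = (\<Sum>i<n. \<Sum>j<m. A $$ (i, j) * B $$ (j, i))"
    using assms by (simp add: mtrace_def scalar_prod_def atLeast0LessThan)
  also have "\<dots> = (\<Sum>j<m. \<Sum>i<n. B $$ (j, i) * A $$ (i, j))"
    by (subst sum.swap) (simp add: mult.commute)
  also have "\<dots> = mtrace (B * A)"
    using assms by (simp add: mtrace_def scalar_prod_def atLeast0LessThan)
  finally show ?thesis .
qed

lemma mtrace_add:
  fixes A B :: "real mat"
  assumes "A \<in> carrier_mat n n" "B \<in> carrier_mat n n"
  shows "mtrace (A + B) = mtrace A + mtrace B"
  using assms by (simp add: mtrace_def sum.distrib)

lemma mtrace_four_block_mat:
  fixes A D :: "real mat"
  assumes "A \<in> carrier_mat k k" "D \<in> carrier_mat m m"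
  shows "mtrace (four_block_mat A B C D) = mtrace A + mtrace D"
proof -
  have sum_split: "(\<Sum>i<k + m. f i) = (\<Sum>i<k. f i) + (\<Sum>i<m. f (k + i))" for f :: "nat \<Rightarrow> real"
    by (induct m) simp_all
  show ?thesis
    using assms by (simp add: mtrace_def sum_split)
qed

lemma pos_def_mat_det_nonzero:
  assumes "pos_def_mat n A"
  shows "det A \<noteq> 0"
proof
  assume "det A = 0"
  moreover have A: "A \<in> carrier_mat n n"
    using assms by (simp add: pos_def_mat_def sym_mat_def)
  ultimately obtain v where v: "v \<in> carrier_vec n" "v \<noteq> 0\<^sub>v n" "A *\<^sub>v v = 0\<^sub>v n"
    using det_0_iff_vec_prod_zero_field by blast
  then have "v \<bullet> (A *\<^sub>v v) > 0"
    using assms unfolding pos_def_mat_def by blast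
  with v show False by simp
qed

lemma minv_inverse:
  fixes A :: "real mat"
  assumes A: "A \<in> carrier_mat n n" and "det A \<noteq> 0"
  shows "minv A \<in> carrier_mat n n" "A * minv A = 1\<^sub>m n" "minv A * A = 1\<^sub>m n"
proof -
  have "A \<in> Units (ring_mat TYPE(real) n undefined)"
    using det_non_zero_imp_unit[OF A] assms(2) .
  then obtain B where "mat_inverse A = Some B"
    using mat_inverse(1)[OF A, of undefined] by (cases "mat_inverse A") auto
  then show "minv A \<in> carrier_mat n n" "A * minv A = 1\<^sub>m n" "minv A * A = 1\<^sub>m n"
    using mat_inverse(2)[OF A] by (simp_all add: minv_def)
qed

lemma transpose_inverse_sym:
  fixes A Ai :: "'a :: comm_ring_1 mat"
  assumes A: "A \<in> carrier_mat n n" and Ai: "Ai \<in> carrier_mat n n"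
    and "transpose_mat A = A" and "A * Ai = 1\<^sub>m n" and "Ai * A = 1\<^sub>m n"
  shows "transpose_mat Ai = Ai"
proof -
  have "transpose_mat Ai * A = 1\<^sub>m n"
    using transpose_mult[OF A Ai] assms by simp
  have "transpose_mat Ai = transpose_mat Ai * (A * Ai)"
    using Ai assms(4) by simp
  also have "\<dots> = transpose_mat Ai * A * Ai"
    using A Ai by simp
  also have "\<dots> = Ai"
    using Ai \<open>transpose_mat Ai * A = 1\<^sub>m n\<close> by simp
  finally show ?thesis .
qed

lemma pos_def_mat_minv:
  assumes "pos_def_mat n A"
  shows "minv A \<in> carrier_mat n n" "A * minv A = 1\<^sub>m n" "minv A * A = 1\<^sub>m n"
    "transpose_mat (minv A) = minv A"
proof -
  have A: "A \<in> carrier_mat n n" "transpose_mat A = A"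
    using assms by (simp_all add: pos_def_mat_def sym_mat_def)
  show inv: "minv A \<in> carrier_mat n n" "A * minv A = 1\<^sub>m n" "minv A * A = 1\<^sub>m n"
    using minv_inverse[OF A(1) pos_def_mat_det_nonzero[OF assms]] by auto
  show "transpose_mat (minv A) = minv A"
    using transpose_inverse_sym[OF A(1) inv(1) A(2) inv(2,3)] .
qed

lemma blk_dims [simp]:
  "dim_row (blk1 k M) = k" "dim_col (blk1 k M) = k"
  "dim_row (blk3 k M) = k" "dim_col (blk3 k M) = dim_col M - k"
  "dim_row (blk2 k M) = dim_row M - k" "dim_col (blk2 k M) = dim_col M - k"
  by (simp_all add: blk1_def blk2_def blk3_def split_block_def Let_def)

lemma blk_index:
  "i < k \<Longrightarrow> j < k \<Longrightarrow> blk1 k M $$ (i, j) = M $$ (i, j)"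
  "i < k \<Longrightarrow> j < dim_col M - k \<Longrightarrow> blk3 k M $$ (i, j) = M $$ (i, j + k)"
  "i < dim_row M - k \<Longrightarrow> j < dim_col M - k \<Longrightarrow> blk2 k M $$ (i, j) = M $$ (i + k, j + k)"
  by (simp_all add: blk1_def blk2_def blk3_def split_block_def Let_def)

lemma blk_carrier:
  assumes "M \<in> carrier_mat (k + m) (k + m)"
  shows "blk1 k M \<in> carrier_mat k k" "blk3 k M \<in> carrier_mat k m" "blk2 k M \<in> carrier_mat m m"
  using assms by (auto intro!: carrier_matI)

lemma blk_add_smult:
  assumes "M \<in> carrier_mat (k + m) (k + m)" "N \<in> carrier_mat (k + m) (k + m)"
  shows "blk1 k (M + s \<cdot>\<^sub>m N) = blk1 k M + s \<cdot>\<^sub>m blk1 k N"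
    "blk3 k (M + s \<cdot>\<^sub>m N) = blk3 k M + s \<cdot>\<^sub>m blk3 k N"
    "blk2 k (M + s \<cdot>\<^sub>m N) = blk2 k M + s \<cdot>\<^sub>m blk2 k N"
  using assms by (auto simp: blk_index)

lemma sym_mat_four_block:
  assumes "sym_mat (k + m) M"
  shows "M = four_block_mat (blk1 k M) (blk3 k M) (transpose_mat (blk3 k M)) (blk2 k M)"
proof -
  have M: "M \<in> carrier_mat (k + m) (k + m)" and "transpose_mat M = M"
    using assms by (auto simp: sym_mat_def)
  then have "M $$ (i, j) = M $$ (j, i)" if "i < k + m" "j < k + m" for i j
    using that by (metis carrier_matD index_transpose_mat(1))
  with M show ?thesis
    by (auto simp: blk_index)
qed

definition shear_mat :: "'a :: semiring_1 mat \<Rightarrow> 'a mat" where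
  "shear_mat N = four_block_mat (1\<^sub>m (dim_row N)) N (0\<^sub>m (dim_col N) (dim_row N)) (1\<^sub>m (dim_col N))"

definition block_diag_mat :: "'a :: zero mat \<Rightarrow> 'a mat \<Rightarrow> 'a mat" where
  "block_diag_mat P R = four_block_mat P (0\<^sub>m (dim_row P) (dim_col R)) (0\<^sub>m (dim_row R) (dim_col P)) R"

lemma shear_mat_carrier: "N \<in> carrier_mat k m \<Longrightarrow> shear_mat N \<in> carrier_mat (k + m) (k + m)"
  by (simp add: shear_mat_def)

lemma block_diag_mat_carrier:
  "P \<in> carrier_mat k k \<Longrightarrow> R \<in> carrier_mat m m \<Longrightarrow> block_diag_mat P R \<in> carrier_mat (k + m) (k + m)"
  by (simp add: block_diag_mat_def)

lemma transpose_shear_mat: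
  assumes "N \<in> carrier_mat k m"
  shows "transpose_mat (shear_mat N) = four_block_mat (1\<^sub>m k) (0\<^sub>m k m) (transpose_mat N) (1\<^sub>m m)"
  using assms transpose_four_block_mat[OF one_carrier_mat assms zero_carrier_mat one_carrier_mat]
  by (simp add: shear_mat_def)

lemma shear_congruence_four_block_zero:
  fixes W Z N :: "'a :: comm_ring_1 mat"
  assumes W: "W \<in> carrier_mat k m" and Z: "Z \<in> carrier_mat m m" and N: "N \<in> carrier_mat k m"
  shows "transpose_mat (shear_mat N) * four_block_mat (0\<^sub>m k k) W (transpose_mat W) Z * shear_mat N
    = four_block_mat (0\<^sub>m k k) W (transpose_mat W) (Z + transpose_mat W * N + transpose_mat N * W)"
    (is "transpose_mat ?Q * ?V * ?Q = _")
proof -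
  have "transpose_mat ?Q * ?V * ?Q = transpose_mat ?Q * (?V * ?Q)"
    using W Z shear_mat_carrier[OF N] by (intro assoc_mult_mat[of _ "k + m" "k + m"]) auto
  also have "?V * ?Q = four_block_mat (0\<^sub>m k k) W (transpose_mat W) (transpose_mat W * N + Z)"
    using W Z N unfolding shear_mat_def
    by (subst mult_four_block_mat[of _ k k _ m _ m _ _ k _ m]) (auto intro!: cong_four_block_mat)
  also have "transpose_mat ?Q * \<dots>
      = four_block_mat (0\<^sub>m k k) W (transpose_mat W) (Z + transpose_mat W * N + transpose_mat N * W)"
    using W Z N unfolding transpose_shear_mat[OF N]
    by (subst mult_four_block_mat[of _ k k _ m _ m _ _ k _ m]) (auto intro!: cong_four_block_mat)
  finally show ?thesis .
qed

lemma four_block_schur_inverse: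
  fixes A Ai B C ti :: "'a :: comm_ring_1 mat"
  assumes A: "A \<in> carrier_mat k k" and Ai: "Ai \<in> carrier_mat k k" and AAi: "A * Ai = 1\<^sub>m k"
    and Ai_sym: "transpose_mat Ai = Ai" and B: "B \<in> carrier_mat k m" and C: "C \<in> carrier_mat m m"
    and ti: "ti \<in> carrier_mat m m" and tti: "(C - transpose_mat B * Ai * B) * ti = 1\<^sub>m m"
  shows "four_block_mat A B (transpose_mat B) C
    * (shear_mat (- (Ai * B)) * block_diag_mat Ai ti * transpose_mat (shear_mat (- (Ai * B))))
    = 1\<^sub>m (k + m)" (is "?Y * (?Q * ?D * transpose_mat ?Q) = _")
proof -
  have N: "- (Ai * B) \<in> carrier_mat k m"
    using Ai B by simp
  have Y: "?Y \<in> carrier_mat (k + m) (k + m)" and Q: "?Q \<in> carrier_mat (k + m) (k + m)"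
    and D: "?D \<in> carrier_mat (k + m) (k + m)"
    using A B C Ai ti shear_mat_carrier[OF N] block_diag_mat_carrier by simp_all
  have assoc: "?Y * (?Q * ?D * transpose_mat ?Q) = ?Y * ?Q * ?D * transpose_mat ?Q"
    using Y Q D by (simp add: assoc_mult_mat[of _ "k + m" "k + m" _ "k + m" _ "k + m"]
        mult_carrier_mat[of _ "k + m" "k + m" _ "k + m"])
  have "A * (Ai * B) = B"
    using A Ai B AAi by (simp flip: assoc_mult_mat)
  then have "?Y * ?Q = four_block_mat A (0\<^sub>m k m) (transpose_mat B) (C - transpose_mat B * Ai * B)"
    using A Ai B C unfolding shear_mat_def
    by (subst mult_four_block_mat[of _ k k _ m _ m _ _ k _ m]) (auto intro!: cong_four_block_mat)
  also have "\<dots> * ?D = four_block_mat (1\<^sub>m k) (0\<^sub>m k m) (transpose_mat B * Ai) (1\<^sub>m m)"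
    using A Ai B C ti AAi tti unfolding block_diag_mat_def
    by (subst mult_four_block_mat[of _ k k _ m _ m _ _ k _ m]) (auto intro!: cong_four_block_mat)
  also have "\<dots> * transpose_mat ?Q = four_block_mat (1\<^sub>m k) (0\<^sub>m k m) (0\<^sub>m m k) (1\<^sub>m m)"
    using Ai B Ai_sym unfolding transpose_shear_mat[OF N]
    by (subst mult_four_block_mat[of _ k k _ m _ m _ _ k _ m])
      (auto intro!: cong_four_block_mat eq_matI simp: transpose_uminus transpose_mult)
  also have "\<dots> = 1\<^sub>m (k + m)"
    by simp
  finally show ?thesis
    unfolding assoc .
qed

lemma left_inverse_eq_right_inverse:
  fixes L A R :: "'a :: semiring_1 mat"
  assumes "L \<in> carrier_mat n n" "A \<in> carrier_mat n n" "R \<in> carrier_mat n n"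
    and "L * A = 1\<^sub>m n" "A * R = 1\<^sub>m n"
  shows "L = R"
proof -
  have "L = L * (A * R)"
    using assms by simp
  also have "\<dots> = L * A * R"
    by (rule assoc_mult_mat[OF assms(1-3), symmetric])
  also have "\<dots> = R"
    using assms by simp
  finally show ?thesis .
qed

lemma mtrace_congruence_square:
  fixes Q D V :: "real mat"
  assumes Q: "Q \<in> carrier_mat n n" and D: "D \<in> carrier_mat n n" and V: "V \<in> carrier_mat n n"
  shows "mtrace (Q * D * transpose_mat Q * V * (Q * D * transpose_mat Q) * V)
    = mtrace (D * (transpose_mat Q * V * Q) * D * (transpose_mat Q * V * Q))"
proof -
  have Qt: "transpose_mat Q \<in> carrier_mat n n"
    using Q by simp
  have "mtrace (Q * D * transpose_mat Q * V * (Q * D * transpose_mat Q) * V)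
      = mtrace (Q * (D * transpose_mat Q * V * Q * D * transpose_mat Q * V))"
    using Q D Qt V by (simp add: assoc_mult_mat[of _ n n _ n _ n] mult_carrier_mat[of _ n n _ n])
  also have "\<dots> = mtrace (D * transpose_mat Q * V * Q * D * transpose_mat Q * V * Q)"
    using Q D Qt V by (intro mtrace_mult_comm[of _ n n]) (auto intro!: mult_carrier_mat[of _ n n _ n])
  also have "\<dots> = mtrace (D * (transpose_mat Q * V * Q) * D * (transpose_mat Q * V * Q))"
    using Q D Qt V by (simp add: assoc_mult_mat[of _ n n _ n _ n] mult_carrier_mat[of _ n n _ n])
  finally show ?thesis .
qed

lemma mtrace_block_diag_four_block_zero:
  fixes P R W Z :: "real mat"
  assumes P: "P \<in> carrier_mat k k" and R: "R \<in> carrier_mat m m"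
    and W: "W \<in> carrier_mat k m" and Z: "Z \<in> carrier_mat m m"
  defines "U \<equiv> four_block_mat (0\<^sub>m k k) W (transpose_mat W) Z"
  shows "mtrace (block_diag_mat P R * U * block_diag_mat P R * U)
    = 2 * mtrace (R * transpose_mat W * P * W) + mtrace (R * Z * R * Z)"
proof -
  have DU: "block_diag_mat P R * U = four_block_mat (0\<^sub>m k k) (P * W) (R * transpose_mat W) (R * Z)"
    using P R W Z unfolding U_def block_diag_mat_def
    by (subst mult_four_block_mat[of _ k k _ m _ m _ _ k _ m]) (auto intro!: cong_four_block_mat)
  have DUc: "block_diag_mat P R * U \<in> carrier_mat (k + m) (k + m)"
    using P R W Z unfolding DU by simp
  have c: "P * W * (R * transpose_mat W) \<in> carrier_mat k k"
    "R * transpose_mat W * (P * W) \<in> carrier_mat m m" "R * Z * (R * Z) \<in> carrier_mat m m"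
    using P R W Z by (auto intro!: mult_carrier_mat)
  have "U \<in> carrier_mat (k + m) (k + m)"
    using W Z by (simp add: U_def)
  then have "block_diag_mat P R * U * block_diag_mat P R * U = (block_diag_mat P R * U) * (block_diag_mat P R * U)"
    by (rule assoc_mult_mat[OF DUc block_diag_mat_carrier[OF P R]])
  also have "\<dots> = four_block_mat (P * W * (R * transpose_mat W)) (P * W * (R * Z))
      (R * Z * (R * transpose_mat W)) (R * transpose_mat W * (P * W) + R * Z * (R * Z))"
    using P R W Z unfolding DU
    by (subst mult_four_block_mat[of _ k k _ m _ m _ _ k _ m]) (auto intro!: cong_four_block_mat)
  finally have "mtrace (block_diag_mat P R * U * block_diag_mat P R * U)
      = mtrace (P * W * (R * transpose_mat W)) + (mtrace (R * transpose_mat W * (P * W))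
        + mtrace (R * Z * (R * Z)))"
    by (simp only: mtrace_four_block_mat[OF c(1) add_carrier_mat[OF c(3)]] mtrace_add[OF c(2,3)])
  also have "mtrace (P * W * (R * transpose_mat W)) = mtrace (R * transpose_mat W * (P * W))"
    using P R W by (intro mtrace_mult_comm[of _ k m]) auto
  also have "R * transpose_mat W * (P * W) = R * transpose_mat W * P * W"
    using R W P by (intro assoc_mult_mat[symmetric, of _ m k]) auto
  also have "R * Z * (R * Z) = R * Z * R * Z"
    using R Z by (intro assoc_mult_mat[symmetric, of _ m m]) auto
  finally show ?thesis
    by linarith
qed

lemma mtrace_inverse_quadratic_four_block_zero:
  fixes A Ai B C ti Yi W Z :: "real mat"
  assumes A: "A \<in> carrier_mat k k" and Ai: "Ai \<in> carrier_mat k k" and AAi: "A * Ai = 1\<^sub>m k"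
    and Ai_sym: "transpose_mat Ai = Ai" and B: "B \<in> carrier_mat k m" and C: "C \<in> carrier_mat m m"
    and ti: "ti \<in> carrier_mat m m" and tti: "(C - transpose_mat B * Ai * B) * ti = 1\<^sub>m m"
    and Yi: "Yi \<in> carrier_mat (k + m) (k + m)"
    and YiY: "Yi * four_block_mat A B (transpose_mat B) C = 1\<^sub>m (k + m)"
    and W: "W \<in> carrier_mat k m" and Z: "Z \<in> carrier_mat m m"
  defines "V \<equiv> four_block_mat (0\<^sub>m k k) W (transpose_mat W) Z"
    and "Zt \<equiv> Z - transpose_mat W * Ai * B - transpose_mat B * Ai * W"
  shows "mtrace (Yi * V * Yi * V) = 2 * mtrace (ti * transpose_mat W * Ai * W) + mtrace (ti * Zt * ti * Zt)"
proof -
  define Q where "Q = shear_mat (- (Ai * B))"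
  define D where "D = block_diag_mat Ai ti"
  define Y where "Y = four_block_mat A B (transpose_mat B) C"
  have N: "- (Ai * B) \<in> carrier_mat k m"
    using Ai B by simp
  have carriers: "Q \<in> carrier_mat (k + m) (k + m)" "D \<in> carrier_mat (k + m) (k + m)"
    "Y \<in> carrier_mat (k + m) (k + m)" "V \<in> carrier_mat (k + m) (k + m)"
    using A B C W Z Ai ti shear_mat_carrier[OF N]
    by (simp_all add: Q_def D_def Y_def V_def block_diag_mat_carrier)
  have Zt: "Zt \<in> carrier_mat m m"
    unfolding Zt_def using Ai B W Z by (auto intro!: minus_carrier_mat mult_carrier_mat)
  have "Q * D * transpose_mat Q \<in> carrier_mat (k + m) (k + m)"
    using carriers by simp
  then have Yi_eq: "Yi = Q * D * transpose_mat Q"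
    using left_inverse_eq_right_inverse[OF Yi carriers(3)] YiY
      four_block_schur_inverse[OF A Ai AAi Ai_sym B C ti tti]
    by (simp add: Y_def Q_def D_def)
  have U: "transpose_mat Q * V * Q = four_block_mat (0\<^sub>m k k) W (transpose_mat W) Zt"
    using shear_congruence_four_block_zero[OF W Z N] Ai B W Z Ai_sym
    by (simp add: Q_def V_def Zt_def transpose_uminus transpose_mult minus_add_uminus_mat[of _ m m])
  have "mtrace (Yi * V * Yi * V) = mtrace (D * (transpose_mat Q * V * Q) * D * (transpose_mat Q * V * Q))"
    unfolding Yi_eq by (rule mtrace_congruence_square[OF carriers(1,2,4)])
  also have "\<dots> = 2 * mtrace (ti * transpose_mat W * Ai * W) + mtrace (ti * Zt * ti * Zt)"
    unfolding U D_def by (rule mtrace_block_diag_four_block_zero[OF Ai ti W Zt])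
  finally show ?thesis .
qed

definition schur_complement :: "nat \<Rightarrow> real mat \<Rightarrow> real mat" where
  "schur_complement k Y = blk2 k Y - transpose_mat (blk3 k Y) * minv (blk1 k Y) * blk3 k Y"

(* The derivative of schur_complement k at Y in a direction V with blk1 k V = 0;
   for other directions it would miss the variation of minv (blk1 k Y). *)
definition schur_complement_deriv :: "nat \<Rightarrow> real mat \<Rightarrow> real mat \<Rightarrow> real mat" where
  "schur_complement_deriv k Y V = blk2 k V - transpose_mat (blk3 k V) * minv (blk1 k Y) * blk3 k Y
     - transpose_mat (blk3 k Y) * minv (blk1 k Y) * blk3 k V"

lemma mtrace_minv_quadratic_blk1_zero:
  assumes Y: "pos_def_mat (k + m) Y" and A: "pos_def_mat k (blk1 k Y)"
    and t: "pos_def_mat m (schur_complement k Y)"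
    and V: "sym_mat (k + m) V" and V1: "blk1 k V = 0\<^sub>m k k"
  shows "mtrace (minv Y * V * minv Y * V)
    = 2 * mtrace (minv (schur_complement k Y) * transpose_mat (blk3 k V) * minv (blk1 k Y) * blk3 k V)
      + mtrace (minv (schur_complement k Y) * schur_complement_deriv k Y V
          * minv (schur_complement k Y) * schur_complement_deriv k Y V)"
proof -
  have Ysym: "sym_mat (k + m) Y"
    using Y by (simp add: pos_def_mat_def)
  then have Yc: "Y \<in> carrier_mat (k + m) (k + m)"
    by (simp add: sym_mat_def)
  have Vc: "V \<in> carrier_mat (k + m) (k + m)"
    using V by (simp add: sym_mat_def)
  have V4: "four_block_mat (0\<^sub>m k k) (blk3 k V) (transpose_mat (blk3 k V)) (blk2 k V) = V"
    using sym_mat_four_block[OF V] V1 by simp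
  have "minv Y * four_block_mat (blk1 k Y) (blk3 k Y) (transpose_mat (blk3 k Y)) (blk2 k Y) = 1\<^sub>m (k + m)"
    using pos_def_mat_minv(3)[OF Y] sym_mat_four_block[OF Ysym] by simp
  from mtrace_inverse_quadratic_four_block_zero[OF blk_carrier(1)[OF Yc] pos_def_mat_minv(1,2,4)[OF A]
      blk_carrier(2,3)[OF Yc] pos_def_mat_minv(1)[OF t] _ pos_def_mat_minv(1)[OF Y] this
      blk_carrier(2,3)[OF Vc]]
  show ?thesis
    using pos_def_mat_minv(2)[OF t]
    unfolding V4 schur_complement_deriv_def by (simp add: schur_complement_def)
qed

lemma index_transpose_mult_mult:
  fixes F P G :: "real mat"
  assumes "F \<in> carrier_mat k m" "P \<in> carrier_mat k k" "G \<in> carrier_mat k m'" "i < m" "j < m'"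
  shows "(transpose_mat F * P * G) $$ (i, j) = (\<Sum>l<k. (\<Sum>l'<k. F $$ (l', i) * P $$ (l', l)) * G $$ (l, j))"
  using assms by (simp add: scalar_prod_def atLeast0LessThan del: assoc_mult_mat)

lemma affine_entry_deriv_zero:
  fixes M N :: "real mat"
  assumes "((\<lambda>s. (M + s \<cdot>\<^sub>m N) $$ (i, j)) has_real_derivative 0) (at 0)"
    and "M \<in> carrier_mat nr nc" "N \<in> carrier_mat nr nc" "i < nr" "j < nc"
  shows "N $$ (i, j) = 0"
proof -
  have "((\<lambda>s. M $$ (i, j) + s * N $$ (i, j)) has_real_derivative N $$ (i, j)) (at 0)"
    by (auto intro!: derivative_eq_intros)
  moreover have "((\<lambda>s. M $$ (i, j) + s * N $$ (i, j)) has_real_derivative 0) (at 0)"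
    using assms by simp
  ultimately show ?thesis
    by (rule DERIV_unique)
qed

lemma schur_complement_line_has_derivative:
  fixes B W P C Z :: "real mat"
  assumes B: "B \<in> carrier_mat k m" and W: "W \<in> carrier_mat k m" and P: "P \<in> carrier_mat k k"
    and C: "C \<in> carrier_mat m m" and Z: "Z \<in> carrier_mat m m" and i: "i < m" and j: "j < m"
  shows "((\<lambda>s. (C + s \<cdot>\<^sub>m Z - transpose_mat (B + s \<cdot>\<^sub>m W) * P * (B + s \<cdot>\<^sub>m W)) $$ (i, j))
    has_real_derivative (Z - transpose_mat W * P * B - transpose_mat B * P * W) $$ (i, j)) (at 0)"
proof -
  have BW: "B + s \<cdot>\<^sub>m W \<in> carrier_mat k m" for s
    using B W by simp
  have "(\<lambda>s. (C + s \<cdot>\<^sub>m Z - transpose_mat (B + s \<cdot>\<^sub>m W) * P * (B + s \<cdot>\<^sub>m W)) $$ (i, j))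
      = (\<lambda>s. C $$ (i, j) + s * Z $$ (i, j) - (\<Sum>l<k. (\<Sum>l'<k. (B $$ (l', i) + s * W $$ (l', i))
          * P $$ (l', l)) * (B $$ (l, j) + s * W $$ (l, j))))"
    using B W C Z i j by (simp add: index_transpose_mult_mult[OF BW P BW i j])
  moreover have "(Z - transpose_mat W * P * B - transpose_mat B * P * W) $$ (i, j)
      = Z $$ (i, j) - (\<Sum>l<k. (\<Sum>l'<k. W $$ (l', i) * P $$ (l', l)) * B $$ (l, j))
        - (\<Sum>l<k. (\<Sum>l'<k. B $$ (l', i) * P $$ (l', l)) * W $$ (l, j))"
    using B W Z i j
    by (simp add: index_transpose_mult_mult[OF W P B i j] index_transpose_mult_mult[OF B P W i j]
        del: assoc_mult_mat)
  moreover have "((\<lambda>s. C $$ (i, j) + s * Z $$ (i, j) - (\<Sum>l<k. (\<Sum>l'<k. (B $$ (l', i) + s * W $$ (l', i))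
          * P $$ (l', l)) * (B $$ (l, j) + s * W $$ (l, j))))
      has_real_derivative Z $$ (i, j) - (\<Sum>l<k. (\<Sum>l'<k. W $$ (l', i) * P $$ (l', l)) * B $$ (l, j))
        - (\<Sum>l<k. (\<Sum>l'<k. B $$ (l', i) * P $$ (l', l)) * W $$ (l, j))) (at 0)"
    by (auto intro!: derivative_eq_intros
        simp: sum_subtractf[symmetric] sum.distrib[symmetric] algebra_simps)
  ultimately show ?thesis
    by simp
qed

lemma vertical_imp_blk1_zero:
  assumes X: "X \<in> carrier_mat (k + m) (k + m)" and Y: "Y \<in> carrier_mat (k + m) (k + m)"
    and VX: "VX \<in> carrier_mat (k + m) (k + m)" and VY: "VY \<in> carrier_mat (k + m) (k + m)"
    and vert: "vertical (k + m) k (X, Y) (VX, VY)"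
  shows "blk1 k VX = 0\<^sub>m k k" "blk1 k VY = 0\<^sub>m k k"
proof -
  have "((\<lambda>s. (blk1 k X + s \<cdot>\<^sub>m blk1 k VX) $$ (i, j)) has_real_derivative 0) (at 0)"
    "((\<lambda>s. (blk1 k Y + s \<cdot>\<^sub>m blk1 k VY) $$ (i, j)) has_real_derivative 0) (at 0)"
    if "i < k" "j < k" for i j
    using vert that by (simp_all add: vertical_def pi_map_def blk_add_smult[OF X VX] blk_add_smult[OF Y VY])
  then show "blk1 k VX = 0\<^sub>m k k" "blk1 k VY = 0\<^sub>m k k"
    using blk_carrier X Y VX VY by (auto intro!: eq_matI affine_entry_deriv_zero)
qed

lemma vertical_imp_schur_complement_deriv_zero:
  assumes X: "X \<in> carrier_mat (k + m) (k + m)" and Y: "Y \<in> carrier_mat (k + m) (k + m)"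
    and VX: "VX \<in> carrier_mat (k + m) (k + m)" and VY: "VY \<in> carrier_mat (k + m) (k + m)"
    and vert: "vertical (k + m) k (X, Y) (VX, VY)" and A: "det (blk1 k Y) \<noteq> 0"
  shows "schur_complement_deriv k Y VY = 0\<^sub>m m m"
proof (rule eq_matI)
  fix i j
  assume "i < dim_row (0\<^sub>m m m :: real mat)" "j < dim_col (0\<^sub>m m m :: real mat)"
  then have i: "i < m" and j: "j < m"
    by simp_all
  note blocks = blk_carrier[OF Y] blk_carrier[OF VY]
  have "blk1 k (Y + s \<cdot>\<^sub>m VY) = blk1 k Y" for s
    using vertical_imp_blk1_zero(2)[OF X Y VX VY vert] blocks by (simp add: blk_add_smult[OF Y VY])
  then have "((\<lambda>s. (blk2 k Y + s \<cdot>\<^sub>m blk2 k VY - transpose_mat (blk3 k Y + s \<cdot>\<^sub>m blk3 k VY)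
      * minv (blk1 k Y) * (blk3 k Y + s \<cdot>\<^sub>m blk3 k VY)) $$ (i, j)) has_real_derivative 0) (at 0)"
    using vert i j by (simp add: vertical_def pi_map_def blk_add_smult[OF Y VY])
  moreover have "minv (blk1 k Y) \<in> carrier_mat k k"
    using minv_inverse(1)[OF blocks(1) A] .
  ultimately show "schur_complement_deriv k Y VY $$ (i, j) = 0\<^sub>m m m $$ (i, j)"
    using schur_complement_line_has_derivative[OF blocks(2,5) _ blocks(3,6) i j] i j
    by (auto simp: schur_complement_deriv_def dest: DERIV_unique)
qed (use Y VY in \<open>simp_all add: schur_complement_deriv_def\<close>)

theorem lemma3p12:
  fixes g g' :: nat and u :: real and \<tau>' :: "real mat \<times> real mat" and t :: "real mat"
    and X Y VX VY :: "real mat"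
  assumes "1 \<le> g" and "g' < g"
    and "\<tau>' \<in> siegel_set g' u"
    and "t \<in> siegel_set_plus (g - g') u"
    and "(X, Y) \<in> siegel_set g u"
    and "pi_map g' (X, Y) = (\<tau>', t)"
    and "(VX, VY) \<in> sym_complex g"
    and "vertical g g' (X, Y) (VX, VY)"
  shows "wp_norm_sq (X, Y) (VX, VY) =
      mtrace (minv t * transpose_mat (blk3 g' VX) * minv (blk1 g' Y) * blk3 g' VX)
    + mtrace (minv t * transpose_mat (blk3 g' VY) * minv (blk1 g' Y) * blk3 g' VY)
    + (1/2) * mtrace (minv t *
          (blk2 g' VX - transpose_mat (blk3 g' VX) * minv (blk1 g' Y) * blk3 g' Y
             - transpose_mat (blk3 g' Y) * minv (blk1 g' Y) * blk3 g' VX)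
        * minv t *
          (blk2 g' VX - transpose_mat (blk3 g' VX) * minv (blk1 g' Y) * blk3 g' Y
             - transpose_mat (blk3 g' Y) * minv (blk1 g' Y) * blk3 g' VX))"
proof -
  define m where "m = g - g'"
  have g: "g = g' + m"
    using assms(2) by (simp add: m_def)
  have XY: "sym_mat g X" "pos_def_mat g Y" and V: "sym_mat g VX" "sym_mat g VY"
    using assms(5,7) by (simp_all add: siegel_set_def siegel_space_def sym_complex_def)
  have A: "pos_def_mat g' (blk1 g' Y)"
    using assms(3,6) by (auto simp: siegel_set_def siegel_space_def pi_map_def)
  have t: "t = schur_complement g' Y" "pos_def_mat m t"
    using assms(4,6) by (auto simp: siegel_set_plus_def pi_map_def schur_complement_def m_def)
  have carriers: "X \<in> carrier_mat (g' + m) (g' + m)" "Y \<in> carrier_mat (g' + m) (g' + m)"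
    "VX \<in> carrier_mat (g' + m) (g' + m)" "VY \<in> carrier_mat (g' + m) (g' + m)"
    using XY V by (simp_all add: g pos_def_mat_def sym_mat_def)
  note vert = assms(8)[unfolded g]
  note V1 = vertical_imp_blk1_zero[OF carriers vert]
  note trace = mtrace_minv_quadratic_blk1_zero[OF XY(2)[unfolded g] A t(2)[unfolded t(1)]]
  have "mtrace (minv Y * VX * minv Y * VX) = 2 * mtrace (minv t * transpose_mat (blk3 g' VX)
      * minv (blk1 g' Y) * blk3 g' VX) + mtrace (minv t * schur_complement_deriv g' Y VX
      * minv t * schur_complement_deriv g' Y VX)"
    using trace[OF V(1)[unfolded g] V1(1)] by (simp add: t(1))
  moreover have "mtrace (minv Y * VY * minv Y * VY) = 2 * mtrace (minv t * transpose_mat (blk3 g' VY)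
      * minv (blk1 g' Y) * blk3 g' VY)"
    using trace[OF V(2)[unfolded g] V1(2)] pos_def_mat_minv(1)[OF t(2)]
      vertical_imp_schur_complement_deriv_zero[OF carriers vert pos_def_mat_det_nonzero[OF A]]
    by (simp add: t(1) mtrace_def)
  ultimately show ?thesis
    by (simp add: wp_norm_sq_def schur_complement_deriv_def)
qed

end
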